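(* Let $\{GM_n\}$ be the Gaussian Tetranacci numbers. Then for every $n\ge1$: (a) $\sum_{k=1}^nGM_k=\frac13\left(GM_{n+2}+2GM_n+GM_{n-1}-(1+i)\right)$; (b) $\sum_{k=1}^nGM_{2k+1}=\frac13\left(2GM_{2n+2}+GM_{2n}-GM_{2n-1}-2-2i\right)$; (c) $\sum_{k=1}^nGM_{2k}=\frac13\left(2GM_{2n+1}+GM_{2n-1}-GM_{2n-2}-2+i\right)$.
   Context: The Gaussian Tetranacci numbers are defined by $GM_0=0$, $GM_1=1$, $GM_2=1+i$, $GM_3=2+i$ and $GM_n=GM_{n-1}+GM_{n-2}+GM_{n-3}+GM_{n-4}$ for $n\ge4$. *)

theory Defs
  imports Complex_Main
begin

fun GM :: "nat \<Rightarrow> complex" where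
  "GM 0 = 0"
| "GM (Suc 0) = 1"
| "GM (Suc (Suc 0)) = 1 + \<i>"
| "GM (Suc (Suc (Suc 0))) = 2 + \<i>"
| "GM (Suc (Suc (Suc (Suc n)))) = GM (Suc (Suc (Suc n))) + GM (Suc (Suc n)) + GM (Suc n) + GM n"

end

theory Submission
  imports Defs
begin

text \<open>All three identities hold for every sequence satisfying the Tetranacci recurrence, with a
  constant determined by the first four terms, and follow by induction on \<open>n\<close>: the step for the
  full sum uses the recurrence once, the steps for the sums over odd and over even indices use it
  at two consecutive indices. Multiplying by 3 instead of dividing keeps the identities valid in
  any commutative ring.\<close>

definition tetranacci_rec :: "(nat \<Rightarrow> 'a::comm_ring_1) \<Rightarrow> bool" where
  "tetranacci_rec f \<longleftrightarrow> (\<forall>n. f (n + 4) = f (n + 3) + f (n + 2) + f (n + 1) + f n)"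

lemma tetranacci_recD:
  "tetranacci_rec f \<Longrightarrow> f (n + 4) = f (n + 3) + f (n + 2) + f (n + 1) + f n"
  unfolding tetranacci_rec_def by blast

lemma tetranacci_sum:
  assumes "tetranacci_rec f" and "n \<ge> 1"
  shows "3 * (\<Sum>k=1..n. f k) = f (n + 2) + 2 * f n + f (n - 1) - (f 3 - f 1 + f 0)"
  using \<open>n \<ge> 1\<close>
proof (induction n rule: nat_induct_at_least)
  case base
  show ?case by (simp add: numeral_eq_Suc algebra_simps)
next
  case (Suc n)
  then obtain m where "n = Suc m" by (cases n) auto
  with Suc.IH tetranacci_recD[OF assms(1), of m] show ?case
    by (simp add: numeral_eq_Suc algebra_simps)
qed

lemma tetranacci_sum_odd:
  assumes "tetranacci_rec f" and "n \<ge> 1"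
  shows "3 * (\<Sum>k=1..n. f (2 * k + 1))
    = 2 * f (2 * n + 2) + f (2 * n) - f (2 * n - 1) - (3 * f 2 - f 3 + f 1 + 2 * f 0)"
  using \<open>n \<ge> 1\<close>
proof (induction n rule: nat_induct_at_least)
  case base
  show ?case using tetranacci_recD[OF assms(1), of 0] by (simp add: numeral_eq_Suc algebra_simps)
next
  case (Suc n)
  then obtain m where "n = Suc m" by (cases n) auto
  with Suc.IH tetranacci_recD[OF assms(1), of "2 * m + 1"] tetranacci_recD[OF assms(1), of "2 * m + 2"]
  show ?case by (simp add: numeral_eq_Suc algebra_simps)
qed

lemma tetranacci_sum_even:
  assumes "tetranacci_rec f" and "n \<ge> 1"
  shows "3 * (\<Sum>k=1..n. f (2 * k))
    = 2 * f (2 * n + 1) + f (2 * n - 1) - f (2 * n - 2) - (2 * f 3 - 3 * f 2 + f 1 - f 0)"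
  using \<open>n \<ge> 1\<close>
proof (induction n rule: nat_induct_at_least)
  case base
  show ?case by (simp add: numeral_eq_Suc algebra_simps)
next
  case (Suc n)
  then obtain m where "n = Suc m" by (cases n) auto
  with Suc.IH tetranacci_recD[OF assms(1), of "2 * m"] tetranacci_recD[OF assms(1), of "2 * m + 1"]
  show ?case by (simp add: numeral_eq_Suc algebra_simps)
qed

lemma tetranacci_rec_GM: "tetranacci_rec GM"
  unfolding tetranacci_rec_def by (simp add: numeral_eq_Suc)

lemma GM_initial: "GM 0 = 0" "GM 1 = 1" "GM 2 = 1 + \<i>" "GM 3 = 2 + \<i>"
  by (simp_all add: numeral_eq_Suc)

theorem mainTheorem13:
  fixes n :: nat
  assumes "n \<ge> 1"
  shows "(\<Sum>k=1..n. GM k) = (GM (n+2) + 2 * GM n + GM (n-1) - (1 + \<i>)) / 3 \<and>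
         (\<Sum>k=1..n. GM (2*k+1)) = (2 * GM (2*n+2) + GM (2*n) - GM (2*n-1) - 2 - 2*\<i>) / 3 \<and>
         (\<Sum>k=1..n. GM (2*k)) = (2 * GM (2*n+1) + GM (2*n-1) - GM (2*n-2) - 2 + \<i>) / 3"
  using tetranacci_sum[OF tetranacci_rec_GM assms] tetranacci_sum_odd[OF tetranacci_rec_GM assms]
    tetranacci_sum_even[OF tetranacci_rec_GM assms]
  unfolding GM_initial by (simp add: field_simps del: GM.simps)

end
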